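(* Let $L=2U\oplus L_0$ be an even lattice of signature $(2,n)$, $n\ge3$, such that every isotropic subgroup of the discriminant group $(A_L,q_L)$ is cyclic. Then the closure in the Baily–Borel compactification $\mathcal F_L^*$ of every $1$-dimensional cusp contains the standard $0$-dimensional cusp.
   Context: $U$ is the hyperbolic plane; $A_L=L^\vee/L$ with discriminant quadratic form $q_L\colon A_L\to\mathbb Q/2\mathbb Z$; a subgroup $H\subset A_L$ is isotropic if $q_L|_H=0$. $\mathcal D_L$ is one of the two components of $\{[w]\in\mathbb P(L\otimes\mathbb C)\mid (w,w)=0,(w,\bar w)>0\}$, $\widetilde{\mathrm O}^+(L)$ is the subgroup of $\mathrm O(L)$ preserving $\mathcal D_L$ and acting trivially on $A_L$, and $\mathcal F_L=\widetilde{\mathrm O}^+(L)\backslash\mathcal D_L$. The $0$-dimensional cusps of $\mathcal F_L^*$ correspond to $\widetilde{\mathrm O}^+(L)$-orbits of primitive isotropic vectors of $L$, and the $1$-dimensional cusps to orbits of primitive totally isotropic rank-$2$ sublattices $E\subset L$; the closure of the $1$-dimensional cusp of $E$ contains the $0$-dimensional cusps of the primitive isotropic vectors lying in $E$. All primitive isotropic vectors $v$ with $\mathrm{div}(v)=1$ (where $\mathrm{div}(v)\mathbb Z=(v,L)$) form a single orbit; the corresponding cusp is called the standard $0$-dimensional cusp. *)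

theory Defs
  imports Main "HOL.Rat"
begin

text \<open>Lattice L = 2U + L0 realised as the integral points of Q^(n+2) (vectors with
  support in {0..<n+2}); coordinates 0,1 and 2,3 span the two copies of U, coordinates
  4..n+1 span L0, whose Gram matrix is G (an (n-2)x(n-2) integer matrix).\<close>

type_synonym qvec = "nat \<Rightarrow> rat"

definition supp_in :: "nat \<Rightarrow> qvec \<Rightarrow> bool" where
  "supp_in N x \<longleftrightarrow> (\<forall>i\<ge>N. x i = 0)"

definition lat :: "nat \<Rightarrow> qvec set" where
  "lat n = {x. supp_in (n + 2) x \<and> (\<forall>i. x i \<in> \<int>)}"

definition bilL :: "nat \<Rightarrow> (nat \<Rightarrow> nat \<Rightarrow> int) \<Rightarrow> qvec \<Rightarrow> qvec \<Rightarrow> rat" where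
  "bilL n G x y = x 0 * y 1 + x 1 * y 0 + x 2 * y 3 + x 3 * y 2
     + (\<Sum>i<n-2. \<Sum>j<n-2. x (4+i) * of_int (G i j) * y (4+j))"

text \<open>L0 is an even lattice; since 2U has signature (2,2), signature (2,n) of L
  means L0 is negative definite of rank n-2.\<close>
definition even_neg_def_gram :: "nat \<Rightarrow> (nat \<Rightarrow> nat \<Rightarrow> int) \<Rightarrow> bool" where
  "even_neg_def_gram m G \<longleftrightarrow>
     (\<forall>i<m. \<forall>j<m. G i j = G j i) \<and> (\<forall>i<m. even (G i i)) \<and>
     (\<forall>x::nat\<Rightarrow>int. (\<exists>i<m. x i \<noteq> 0) \<longrightarrow> (\<Sum>i<m. \<Sum>j<m. x i * G i j * x j) < 0)"

definition dual_lat :: "nat \<Rightarrow> (nat \<Rightarrow> nat \<Rightarrow> int) \<Rightarrow> qvec set" where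
  "dual_lat n G = {x. supp_in (n + 2) x \<and> (\<forall>y\<in>lat n. bilL n G x y \<in> \<int>)}"

text \<open>Subgroups H of A_L = L^dual / L correspond to additive subgroups H' with
  L \<subseteq> H' \<subseteq> L^dual; H is isotropic iff q_L(x) = (x,x) mod 2Z vanishes on H',
  and H is cyclic iff H' = Z g + L for some g.\<close>
definition isotropic_subgroups_cyclic :: "nat \<Rightarrow> (nat \<Rightarrow> nat \<Rightarrow> int) \<Rightarrow> bool" where
  "isotropic_subgroups_cyclic n G \<longleftrightarrow>
    (\<forall>H. lat n \<subseteq> H \<and> H \<subseteq> dual_lat n G \<and>
         (\<forall>x\<in>H. \<forall>y\<in>H. (\<lambda>i. x i - y i) \<in> H) \<and>
         (\<forall>x\<in>H. \<exists>k::int. bilL n G x x = 2 * of_int k)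
       \<longrightarrow> (\<exists>g\<in>H. H = {(\<lambda>i. of_int k * g i + l i) | k l. k \<in> (UNIV::int set) \<and> l \<in> lat n}))"

definition primitive_vec :: "nat \<Rightarrow> qvec \<Rightarrow> bool" where
  "primitive_vec n v \<longleftrightarrow> v \<in> lat n \<and> v \<noteq> (\<lambda>_. 0) \<and>
     (\<forall>w\<in>lat n. \<forall>k::int. v = (\<lambda>i. of_int k * w i) \<longrightarrow> k = 1 \<or> k = -1)"

definition primitive_isotropic :: "nat \<Rightarrow> (nat \<Rightarrow> nat \<Rightarrow> int) \<Rightarrow> qvec \<Rightarrow> bool" where
  "primitive_isotropic n G v \<longleftrightarrow> primitive_vec n v \<and> bilL n G v v = 0"

definition lat_div :: "nat \<Rightarrow> (nat \<Rightarrow> nat \<Rightarrow> int) \<Rightarrow> qvec \<Rightarrow> int" where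
  "lat_div n G v = Gcd {k::int. \<exists>w\<in>lat n. bilL n G v w = of_int k}"

definition span2 :: "qvec \<Rightarrow> qvec \<Rightarrow> qvec set" where
  "span2 e1 e2 = {(\<lambda>i. of_int a * e1 i + of_int b * e2 i) | a b. a \<in> (UNIV::int set) \<and> b \<in> (UNIV::int set)}"

definition prim_tot_iso_rank2 :: "nat \<Rightarrow> (nat \<Rightarrow> nat \<Rightarrow> int) \<Rightarrow> qvec set \<Rightarrow> bool" where
  "prim_tot_iso_rank2 n G E \<longleftrightarrow>
    (\<exists>e1 e2. e1 \<in> lat n \<and> e2 \<in> lat n \<and> E = span2 e1 e2 \<and>
       (\<forall>a b::int. (\<lambda>i. of_int a * e1 i + of_int b * e2 i) = (\<lambda>_. 0) \<longrightarrow> a = 0 \<and> b = 0) \<and>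
       bilL n G e1 e1 = 0 \<and> bilL n G e1 e2 = 0 \<and> bilL n G e2 e2 = 0 \<and>
       (\<forall>w\<in>lat n. \<forall>k::int. k \<noteq> 0 \<longrightarrow> (\<lambda>i. of_int k * w i) \<in> E \<longrightarrow> w \<in> E))"

end

theory Submission
  imports Defs
begin

text \<open>Let E be spanned by e1, e2 and let H = (E \<otimes> Q \<inter> L^\<or>) + L. Since E is totally
  isotropic and L is even, H/L is an isotropic subgroup of A_L, hence cyclic, generated by
  the class of some g = \<alpha> e1 + \<beta> e2 + l. Choose coprime integers r, s with r \<alpha> + s \<beta> = 0 and
  c, d with c r + d s = 1, and put v = c e1 + d e2. If v/k \<in> L^\<or>, then v/k \<in> H, so
  v/k - m g \<in> L for some m; since E is primitive, c/k - m \<alpha> and d/k - m \<beta> are integers, and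
  so is their combination 1/k = r (c/k - m \<alpha>) + s (d/k - m \<beta>). Thus div(v) = 1, and a vector
  of divisor 1 is primitive.\<close>

lemma even_quadratic_form:
  fixes x :: "nat \<Rightarrow> int"
  assumes "\<forall>i<m. \<forall>j<m. G i j = G j i" "\<forall>i<m. even (G i i)"
  shows "even (\<Sum>i<m. \<Sum>j<m. x i * G i j * x j)"
  using assms
proof (induction m)
  case 0
  then show ?case by simp
next
  case (Suc m)
  have IH: "even (\<Sum>i<m. \<Sum>j<m. x i * G i j * x j)"
    using Suc by auto
  have "(\<Sum>j<m. x m * G m j * x j) = (\<Sum>j<m. x j * G j m * x m)"
    using Suc.prems(1) by (intro sum.cong) auto
  then have "(\<Sum>i<Suc m. \<Sum>j<Suc m. x i * G i j * x j) =
      (\<Sum>i<m. \<Sum>j<m. x i * G i j * x j) + 2 * (\<Sum>j<m. x j * G j m * x m) + x m * G m m * x m"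
    by (simp add: sum.distrib)
  moreover have "even (x m * G m m * x m)"
    using Suc.prems(2) by auto
  ultimately show ?case
    using IH by (simp only: even_add even_mult_iff even_numeral simp_thms)
qed

lemma bilL_lincomb_left:
  "bilL n G (\<lambda>i. a * x i + b * y i) z = a * bilL n G x z + b * bilL n G y z"
  unfolding bilL_def by (simp add: algebra_simps sum.distrib sum_distrib_left)

lemma bilL_lincomb_right:
  "bilL n G z (\<lambda>i. a * x i + b * y i) = a * bilL n G z x + b * bilL n G z y"
  unfolding bilL_def by (simp add: algebra_simps sum.distrib sum_distrib_left)

lemma bilL_add_left: "bilL n G (\<lambda>i. x i + y i) z = bilL n G x z + bilL n G y z"
  unfolding bilL_def by (simp add: algebra_simps sum.distrib)

lemma bilL_add_right: "bilL n G z (\<lambda>i. x i + y i) = bilL n G z x + bilL n G z y"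
  unfolding bilL_def by (simp add: algebra_simps sum.distrib)

lemma bilL_diff_left: "bilL n G (\<lambda>i. x i - y i) z = bilL n G x z - bilL n G y z"
  unfolding bilL_def by (simp add: algebra_simps sum_subtractf)

lemma bilL_scale_left: "bilL n G (\<lambda>i. a * x i) z = a * bilL n G x z"
  unfolding bilL_def by (simp add: algebra_simps sum_distrib_left)

lemma bilL_commute:
  assumes "\<forall>i<n-2. \<forall>j<n-2. G i j = G j i"
  shows "bilL n G x y = bilL n G y x"
proof -
  have "(\<Sum>i<n-2. \<Sum>j<n-2. x (4+i) * of_int (G i j) * y (4+j)) =
        (\<Sum>j<n-2. \<Sum>i<n-2. x (4+i) * of_int (G i j) * y (4+j))"
    by (rule sum.swap)
  also have "\<dots> = (\<Sum>i<n-2. \<Sum>j<n-2. y (4+i) * of_int (G i j) * x (4+j))"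
    using assms by (intro sum.cong refl) (simp add: mult_ac)
  finally show ?thesis
    unfolding bilL_def by (simp add: algebra_simps)
qed

lemma bilL_lat_Ints:
  assumes "x \<in> lat n" "y \<in> lat n"
  shows "bilL n G x y \<in> \<int>"
  using assms unfolding bilL_def lat_def
  by (auto intro!: Ints_add Ints_mult Ints_sum)

lemma bilL_self_even:
  assumes "x \<in> lat n" "\<forall>i<n-2. \<forall>j<n-2. G i j = G j i" "\<forall>i<n-2. even (G i i)"
  shows "\<exists>k::int. bilL n G x x = 2 * of_int k"
proof -
  define z where "z = (\<lambda>i. \<lfloor>x i\<rfloor>)"
  have x_eq: "x i = of_int (z i)" for i
    using assms(1) unfolding lat_def z_def by (metis Ints_cases floor_of_int mem_Collect_eq)
  obtain t where t: "(\<Sum>i<n-2. \<Sum>j<n-2. z (4+i) * G i j * z (4+j)) = 2 * t"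
    using even_quadratic_form[OF assms(2,3), of "\<lambda>i. z (4+i)"] by blast
  have "bilL n G x x = of_int (2 * (z 0 * z 1 + z 2 * z 3)
      + (\<Sum>i<n-2. \<Sum>j<n-2. z (4+i) * G i j * z (4+j)))"
    unfolding bilL_def x_eq by (simp add: algebra_simps)
  then show ?thesis
    using t by (intro exI[of _ "z 0 * z 1 + z 2 * z 3 + t"]) simp
qed

lemma zero_in_lat: "(\<lambda>_. 0) \<in> lat n"
  unfolding lat_def supp_in_def by auto

lemma lat_diff: "x \<in> lat n \<Longrightarrow> y \<in> lat n \<Longrightarrow> (\<lambda>i. x i - y i) \<in> lat n"
  unfolding lat_def supp_in_def by auto

lemma lat_scale_add: "x \<in> lat n \<Longrightarrow> y \<in> lat n \<Longrightarrow> (\<lambda>i. of_int a * x i + y i) \<in> lat n"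
  unfolding lat_def supp_in_def by auto

lemma lat_subset_dual_lat: "lat n \<subseteq> dual_lat n G"
  using bilL_lat_Ints unfolding dual_lat_def lat_def by blast

lemma dual_lat_add:
  "x \<in> dual_lat n G \<Longrightarrow> y \<in> dual_lat n G \<Longrightarrow> (\<lambda>i. x i + y i) \<in> dual_lat n G"
  unfolding dual_lat_def supp_in_def by (auto simp: bilL_add_left)

lemma dual_lat_diff:
  "x \<in> dual_lat n G \<Longrightarrow> y \<in> dual_lat n G \<Longrightarrow> (\<lambda>i. x i - y i) \<in> dual_lat n G"
  unfolding dual_lat_def supp_in_def by (auto simp: bilL_diff_left)

lemma lat_div_eq_1I:
  assumes v: "v \<in> lat n"
    and unit: "\<And>k. k \<noteq> 0 \<Longrightarrow> (\<lambda>i. v i / of_int k) \<in> dual_lat n G \<Longrightarrow> k = 1 \<or> k = -1"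
  shows "lat_div n G v = 1"
proof -
  define S where "S = {k::int. \<exists>w\<in>lat n. bilL n G v w = of_int k}"
  have dvd_S_unit: "k = 1 \<or> k = -1" if "k \<noteq> 0" "\<forall>z\<in>S. k dvd z" for k
  proof (rule unit[OF \<open>k \<noteq> 0\<close>])
    have "bilL n G (\<lambda>i. v i / of_int k) w \<in> \<int>" if w: "w \<in> lat n" for w
    proof -
      obtain z where z: "bilL n G v w = of_int z"
        using bilL_lat_Ints[OF v w] Ints_cases by metis
      then obtain t where "z = k * t"
        using w \<open>\<forall>z\<in>S. k dvd z\<close> unfolding S_def by blast
      have "(\<lambda>i. v i / of_int k) = (\<lambda>i. inverse (of_int k) * v i)"
        by (simp add: divide_inverse mult.commute)
      then have "bilL n G (\<lambda>i. v i / of_int k) w = of_int t"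
        using z \<open>z = k * t\<close> \<open>k \<noteq> 0\<close> by (simp add: bilL_scale_left)
      then show ?thesis by simp
    qed
    moreover have "supp_in (n + 2) (\<lambda>i. v i / of_int k)"
      using v unfolding lat_def supp_in_def by simp
    ultimately show "(\<lambda>i. v i / of_int k) \<in> dual_lat n G"
      unfolding dual_lat_def by blast
  qed
  have "Gcd S \<noteq> 0"
  proof
    assume "Gcd S = 0"
    then have "\<forall>z\<in>S. 2 dvd z"
      by auto
    then show False
      using dvd_S_unit[of 2] by simp
  qed
  then have "Gcd S = 1 \<or> Gcd S = -1"
    using dvd_S_unit[of "Gcd S"] by (simp add: Gcd_dvd)
  moreover have "Gcd S \<ge> 0"
    by simp
  ultimately show ?thesis
    unfolding lat_div_def S_def[symmetric] by linarith
qed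

lemma primitive_vec_if_lat_div_eq_1:
  assumes v: "v \<in> lat n" and div: "lat_div n G v = 1"
  shows "primitive_vec n v"
  unfolding primitive_vec_def
proof (intro conjI ballI allI impI v)
  show "v \<noteq> (\<lambda>_. 0)"
  proof
    assume "v = (\<lambda>_. 0)"
    then have "lat_div n G v = 0"
      unfolding lat_div_def bilL_def by auto
    with div show False by simp
  qed
next
  fix w k assume w: "w \<in> lat n" and v_eq: "v = (\<lambda>i. of_int k * w i)"
  have "k dvd z" if z: "z \<in> {k. \<exists>w\<in>lat n. bilL n G v w = of_int k}" for z
  proof -
    obtain y where y: "y \<in> lat n" "bilL n G v y = of_int z"
      using z by blast
    obtain t where "bilL n G w y = of_int t"
      using bilL_lat_Ints[OF w y(1)] Ints_cases by metis
    then have "z = k * t"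
      using y(2) unfolding v_eq bilL_scale_left by (metis of_int_eq_iff of_int_mult)
    then show ?thesis by simp
  qed
  then have "k dvd lat_div n G v"
    unfolding lat_div_def by (rule Gcd_greatest)
  then show "k = 1 \<or> k = -1"
    using div by (auto simp: zdvd1_eq abs_if split: if_splits)
qed

lemma rat_common_denominator:
  fixes a b :: rat
  obtains K :: int where "K > 0" "of_int K * a \<in> \<int>" "of_int K * b \<in> \<int>"
proof -
  obtain an ad where qa: "quotient_of a = (an, ad)" by (cases "quotient_of a")
  obtain bn bd where qb: "quotient_of b = (bn, bd)" by (cases "quotient_of b")
  have a: "ad > 0" "a = of_int an / of_int ad"
    using qa quotient_of_denom_pos quotient_of_div by auto
  have b: "bd > 0" "b = of_int bn / of_int bd"
    using qb quotient_of_denom_pos quotient_of_div by auto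
  have "of_int (ad * bd) * a = of_int (an * bd)" "of_int (ad * bd) * b = of_int (bn * ad)"
    using a b by (simp_all add: field_simps)
  then show ?thesis
    using a b by (intro that[of "ad * bd"]) auto
qed

lemma exists_coprime_annihilator:
  fixes \<alpha> \<beta> :: rat
  obtains r s :: int where "coprime r s" "of_int r * \<alpha> + of_int s * \<beta> = 0"
proof (cases "\<alpha> = 0")
  case True
  then show ?thesis by (intro that[of 1 0]) auto
next
  case False
  obtain p q where pq: "quotient_of (\<beta> / \<alpha>) = (p, q)" by (cases "quotient_of (\<beta> / \<alpha>)")
  have q: "q > 0" "\<beta> / \<alpha> = of_int p / of_int q" "coprime p q"
    using pq quotient_of_denom_pos quotient_of_div quotient_of_coprime by auto
  then have "of_int p * \<alpha> + of_int (-q) * \<beta> = 0"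
    using False by (simp add: field_simps)
  then show ?thesis
    using q(3) by (intro that[of p "-q"]) auto
qed

lemma inverse_of_int_in_Ints:
  assumes "k \<noteq> 0" "(1 / of_int k :: rat) \<in> \<int>"
  shows "k = 1 \<or> k = -1"
proof -
  obtain t where "(1 / of_int k :: rat) = of_int t"
    using assms(2) Ints_cases by blast
  then have "k * t = 1"
    using assms(1) by (simp add: field_simps) (metis of_int_eq_1_iff of_int_mult)
  then show ?thesis
    using zmult_eq_1_iff by blast
qed

locale isotropic_plane =
  fixes n :: nat and G :: "nat \<Rightarrow> nat \<Rightarrow> int" and e1 e2 :: qvec
  assumes gram_sym: "\<forall>i<n-2. \<forall>j<n-2. G i j = G j i"
    and gram_even: "\<forall>i<n-2. even (G i i)"
    and e1_lat: "e1 \<in> lat n" and e2_lat: "e2 \<in> lat n"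
    and independent:
      "\<forall>a b::int. (\<lambda>i. of_int a * e1 i + of_int b * e2 i) = (\<lambda>_. 0) \<longrightarrow> a = 0 \<and> b = 0"
    and iso11: "bilL n G e1 e1 = 0" and iso12: "bilL n G e1 e2 = 0"
    and iso22: "bilL n G e2 e2 = 0"
    and saturated:
      "\<forall>w\<in>lat n. \<forall>k::int. k \<noteq> 0 \<longrightarrow> (\<lambda>i. of_int k * w i) \<in> span2 e1 e2 \<longrightarrow> w \<in> span2 e1 e2"
begin

definition plane_vec :: "rat \<Rightarrow> rat \<Rightarrow> qvec" where
  "plane_vec a b = (\<lambda>i. a * e1 i + b * e2 i)"

lemma span2_eq: "span2 e1 e2 = {plane_vec (of_int a) (of_int b) | a b. True}"
  unfolding span2_def plane_vec_def by blast

lemma plane_vec_diff: "(\<lambda>i. plane_vec a b i - plane_vec c d i) = plane_vec (a - c) (b - d)"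
  unfolding plane_vec_def by (auto simp: algebra_simps)

lemma plane_vec_scale: "(\<lambda>i. k * plane_vec a b i) = plane_vec (k * a) (k * b)"
  unfolding plane_vec_def by (auto simp: algebra_simps)

lemma plane_vec_of_int_lat: "plane_vec (of_int a) (of_int b) \<in> lat n"
  using e1_lat e2_lat unfolding plane_vec_def lat_def supp_in_def by auto

lemma plane_vec_isotropic: "bilL n G (plane_vec a b) (plane_vec c d) = 0"
proof -
  have "bilL n G e2 e1 = 0"
    using iso12 bilL_commute[OF gram_sym] by metis
  then show ?thesis
    unfolding plane_vec_def by (simp add: bilL_lincomb_left bilL_lincomb_right iso11 iso12 iso22)
qed

lemma plane_vec_eq_0:
  assumes "plane_vec a b = (\<lambda>_. 0)"
  shows "a = 0 \<and> b = 0"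
proof -
  obtain K :: int where K: "K > 0" "of_int K * a \<in> \<int>" "of_int K * b \<in> \<int>"
    by (rule rat_common_denominator)
  then obtain a' b' where a': "of_int K * a = of_int a'" and b': "of_int K * b = of_int b'"
    by (metis Ints_cases)
  have "plane_vec (of_int a') (of_int b') = (\<lambda>_. 0)"
    using arg_cong[OF assms, of "\<lambda>v i. of_int K * v i"] by (simp add: plane_vec_scale a' b')
  then have "a' = 0 \<and> b' = 0"
    using independent unfolding plane_vec_def by blast
  then show ?thesis
    using a' b' K(1) by simp
qed

lemma plane_vec_in_lat_Ints:
  assumes "plane_vec a b \<in> lat n"
  shows "a \<in> \<int> \<and> b \<in> \<int>"
proof -
  obtain K :: int where K: "K > 0" "of_int K * a \<in> \<int>" "of_int K * b \<in> \<int>"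
    by (rule rat_common_denominator)
  then obtain a' b' where a': "of_int K * a = of_int a'" and b': "of_int K * b = of_int b'"
    by (metis Ints_cases)
  have "(\<lambda>i. of_int K * plane_vec a b i) \<in> span2 e1 e2"
    unfolding plane_vec_scale a' b' span2_eq by blast
  then have "plane_vec a b \<in> span2 e1 e2"
    using saturated assms \<open>K > 0\<close> by (metis less_irrefl)
  then obtain p q :: int where "plane_vec a b = plane_vec (of_int p) (of_int q)"
    unfolding span2_eq by blast
  then have "plane_vec (a - of_int p) (b - of_int q) = (\<lambda>_. 0)"
    by (metis (no_types) plane_vec_diff diff_self)
  then show ?thesis
    using plane_vec_eq_0 by (metis Ints_of_int eq_iff_diff_eq_0)
qed

definition overlattice :: "qvec set" where
  "overlattice = {(\<lambda>i. plane_vec a b i + l i) | a b l. plane_vec a b \<in> dual_lat n G \<and> l \<in> lat n}"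

lemma lat_subset_overlattice: "lat n \<subseteq> overlattice"
proof
  fix l assume "l \<in> lat n"
  moreover have "plane_vec 0 0 \<in> dual_lat n G"
    using lat_subset_dual_lat zero_in_lat unfolding plane_vec_def by auto
  moreover have "l = (\<lambda>i. plane_vec 0 0 i + l i)"
    by (simp add: plane_vec_def)
  ultimately show "l \<in> overlattice"
    unfolding overlattice_def by blast
qed

lemma overlattice_subset_dual_lat: "overlattice \<subseteq> dual_lat n G"
  unfolding overlattice_def using lat_subset_dual_lat by (auto intro!: dual_lat_add)

lemma overlattice_diff:
  assumes "x \<in> overlattice" "y \<in> overlattice"
  shows "(\<lambda>i. x i - y i) \<in> overlattice"
proof -
  obtain a b l a' b' l' where
      u: "plane_vec a b \<in> dual_lat n G" and l: "l \<in> lat n" and x: "x = (\<lambda>i. plane_vec a b i + l i)"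
    and u': "plane_vec a' b' \<in> dual_lat n G" and l': "l' \<in> lat n" and y: "y = (\<lambda>i. plane_vec a' b' i + l' i)"
    using assms unfolding overlattice_def by blast
  have "plane_vec (a - a') (b - b') \<in> dual_lat n G"
    using dual_lat_diff[OF u u'] by (simp add: plane_vec_diff)
  moreover have "(\<lambda>i. x i - y i) = (\<lambda>i. plane_vec (a - a') (b - b') i + (l i - l' i))"
    unfolding x y plane_vec_diff[symmetric] by (auto simp: algebra_simps)
  ultimately show ?thesis
    unfolding overlattice_def using lat_diff[OF l l'] by fast
qed

lemma overlattice_norm_even:
  assumes "x \<in> overlattice"
  shows "\<exists>k::int. bilL n G x x = 2 * of_int k"
proof -
  obtain a b l where u: "plane_vec a b \<in> dual_lat n G" and l: "l \<in> lat n"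
    and x: "x = (\<lambda>i. plane_vec a b i + l i)"
    using assms unfolding overlattice_def by blast
  obtain t where t: "bilL n G (plane_vec a b) l = of_int t"
    using u l Ints_cases unfolding dual_lat_def by blast
  obtain k where k: "bilL n G l l = 2 * of_int k"
    using bilL_self_even[OF l gram_sym gram_even] by blast
  have "bilL n G x x = 2 * of_int (t + k)"
    unfolding x bilL_add_left bilL_add_right
    using plane_vec_isotropic t k bilL_commute[OF gram_sym, of l "plane_vec a b"] by simp
  then show ?thesis by blast
qed

lemma overlattice_cyclic:
  assumes "isotropic_subgroups_cyclic n G"
  obtains \<alpha> \<beta> l1 where "l1 \<in> lat n" and
    "overlattice = {(\<lambda>i. of_int k * (plane_vec \<alpha> \<beta> i + l1 i) + l i) | k l. l \<in> lat n}"
proof -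
  have "lat n \<subseteq> overlattice \<and> overlattice \<subseteq> dual_lat n G \<and>
      (\<forall>x\<in>overlattice. \<forall>y\<in>overlattice. (\<lambda>i. x i - y i) \<in> overlattice) \<and>
      (\<forall>x\<in>overlattice. \<exists>k::int. bilL n G x x = 2 * of_int k)"
    using lat_subset_overlattice overlattice_subset_dual_lat overlattice_diff overlattice_norm_even
    by blast
  then obtain g where "g \<in> overlattice"
    and "overlattice = {(\<lambda>i. of_int k * g i + l i) | k l. k \<in> (UNIV::int set) \<and> l \<in> lat n}"
    using assms unfolding isotropic_subgroups_cyclic_def by (elim allE impE) blast+
  moreover from \<open>g \<in> overlattice\<close> obtain \<alpha> \<beta> l1
    where "l1 \<in> lat n" and "g = (\<lambda>i. plane_vec \<alpha> \<beta> i + l1 i)"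
    unfolding overlattice_def by blast
  ultimately show ?thesis
    using that by auto
qed

lemma exists_plane_vec_lat_div_1:
  assumes "isotropic_subgroups_cyclic n G"
  obtains c d :: int where "lat_div n G (plane_vec (of_int c) (of_int d)) = 1"
proof -
  obtain \<alpha> \<beta> l1 where l1: "l1 \<in> lat n" and H_eq:
      "overlattice = {(\<lambda>i. of_int k * (plane_vec \<alpha> \<beta> i + l1 i) + l i) | k l. l \<in> lat n}"
    using overlattice_cyclic[OF assms] .
  obtain r s where "coprime r s" and rs: "of_int r * \<alpha> + of_int s * \<beta> = 0"
    by (rule exists_coprime_annihilator)
  then obtain c d where cd: "c * r + d * s = 1"
    using bezout_int[of r s] by auto
  define v where "v = plane_vec (of_int c) (of_int d)"
  have "lat_div n G v = 1"
  proof (rule lat_div_eq_1I)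
    show "v \<in> lat n"
      unfolding v_def by (rule plane_vec_of_int_lat)
  next
    fix k :: int assume "k \<noteq> 0" and v_k: "(\<lambda>i. v i / of_int k) \<in> dual_lat n G"
    define c' d' where "c' = of_int c / (of_int k :: rat)" and "d' = of_int d / (of_int k :: rat)"
    have "(\<lambda>i. v i / of_int k) = plane_vec c' d'"
      unfolding v_def c'_def d'_def plane_vec_def by (auto simp: add_divide_distrib)
    then have "(\<lambda>i. plane_vec c' d' i + 0) \<in> overlattice"
      using v_k zero_in_lat unfolding overlattice_def by fastforce
    then obtain m l where l: "l \<in> lat n"
      and m: "plane_vec c' d' = (\<lambda>i. of_int m * (plane_vec \<alpha> \<beta> i + l1 i) + l i)"
      unfolding H_eq by auto
    have "plane_vec (c' - of_int m * \<alpha>) (d' - of_int m * \<beta>) = (\<lambda>i. of_int m * l1 i + l i)"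
      using m unfolding plane_vec_def by (auto simp: algebra_simps fun_eq_iff)
    then have "c' - of_int m * \<alpha> \<in> \<int>" "d' - of_int m * \<beta> \<in> \<int>"
      using plane_vec_in_lat_Ints lat_scale_add[OF l1 l] by metis+
    moreover have "1 / of_int k = of_int r * (c' - of_int m * \<alpha>) + of_int s * (d' - of_int m * \<beta>)"
    proof -
      have "1 / of_int k = of_int (c * r + d * s) / (of_int k :: rat)"
        using cd by simp
      also have "\<dots> = of_int r * c' + of_int s * d'"
        unfolding c'_def d'_def by (simp add: add_divide_distrib mult_ac)
      also have "\<dots> = of_int r * (c' - of_int m * \<alpha>) + of_int s * (d' - of_int m * \<beta>)"
        using arg_cong[OF rs, of "\<lambda>x. of_int m * x"] by (simp add: algebra_simps)
      finally show ?thesis .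
    qed
    ultimately have "(1 / of_int k :: rat) \<in> \<int>"
      by (simp add: Ints_add Ints_mult)
    then show "k = 1 \<or> k = -1"
      using inverse_of_int_in_Ints \<open>k \<noteq> 0\<close> by blast
  qed
  then show ?thesis
    unfolding v_def by (rule that)
qed

end

theorem lemma5p1:
  fixes n :: nat and G :: "nat \<Rightarrow> nat \<Rightarrow> int" and E :: "qvec set"
  assumes "n \<ge> 3"
    and "even_neg_def_gram (n - 2) G"
    and "isotropic_subgroups_cyclic n G"
    and "prim_tot_iso_rank2 n G E"
  shows "\<exists>v\<in>E. primitive_isotropic n G v \<and> lat_div n G v = 1"
proof -
  obtain e1 e2 where E: "E = span2 e1 e2" and plane: "isotropic_plane n G e1 e2"
    using assms(2,4) unfolding prim_tot_iso_rank2_def even_neg_def_gram_def isotropic_plane_def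
    by blast
  interpret isotropic_plane n G e1 e2
    by (rule plane)
  obtain c d where div: "lat_div n G (plane_vec (of_int c) (of_int d)) = 1"
    using exists_plane_vec_lat_div_1[OF assms(3)] .
  have "primitive_isotropic n G (plane_vec (of_int c) (of_int d))"
    unfolding primitive_isotropic_def
    using primitive_vec_if_lat_div_eq_1[OF plane_vec_of_int_lat div] plane_vec_isotropic by simp
  moreover have "plane_vec (of_int c) (of_int d) \<in> E"
    unfolding E span2_eq by blast
  ultimately show ?thesis
    using div by blast
qed

end
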